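(* Let $S$ be a MANS-semigroup with $\mathrm{msg}(S)=\{n_1<n_2<\cdots<n_e\}$, where $2\leq e\leq n_1-1$, and let $\mathrm{Ap}(S,n_1)=\{w(0),w(1),\ldots,w(n_1-1)\}$ with $w(i)$ the least element of $S$ congruent to $i$ modulo $n_1$. If $n_{e+1}\in\mathbb{N}$ satisfies $n_e<n_{e+1}$, $n_e\bmod n_1<n_{e+1}\bmod n_1$, and $w(n_{e+1}\bmod n_1-1)<n_{e+1}<w(n_{e+1}\bmod n_1)$, then $S'=\langle n_1,\ldots,n_e,n_{e+1}\rangle$ is a MANS-semigroup with $\mathrm{e}(S')=\mathrm{e}(S)+1$.
   Context: $\mathbb{N}=\{0,1,2,\ldots\}$. A numerical semigroup is a subset $S\subseteq\mathbb{N}$ closed under addition, containing $0$, with $\mathbb{N}\setminus S$ finite; $\langle A\rangle$ is the submonoid generated by $A$; $\mathrm{msg}(S)$ is the unique finite minimal system of generators and $\mathrm{e}(S)=|\mathrm{msg}(S)|$. For $n\in S\setminus\{0\}$, $\mathrm{Ap}(S,n)=\{s\in S:s-n\notin S\}$. $S$ is a MANS-semigroup if $w(1)<\cdots<w(\mathrm{m}(S)-1)$, where $\mathrm{m}(S)$ is the least element of $S\setminus\{0\}$ and $w(i)$ the least element of $S$ congruent to $i$ modulo $\mathrm{m}(S)$. $a\bmod b$ is the remainder of the division of $a$ by $b$. *)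

theory Defs
  imports Main
begin

definition numerical_semigroup :: "nat set \<Rightarrow> bool" where
  "numerical_semigroup S \<longleftrightarrow>
     0 \<in> S \<and> (\<forall>a\<in>S. \<forall>b\<in>S. a + b \<in> S) \<and> finite (UNIV - S)"

inductive_set gen :: "nat set \<Rightarrow> nat set" for A :: "nat set" where
  gen_zero: "0 \<in> gen A"
| gen_add: "a \<in> A \<Longrightarrow> x \<in> gen A \<Longrightarrow> a + x \<in> gen A"

definition is_min_gen :: "nat set \<Rightarrow> nat set \<Rightarrow> bool" where
  "is_min_gen A S \<longleftrightarrow> gen A = S \<and> (\<forall>B. B \<subset> A \<longrightarrow> gen B \<noteq> S)"

definition msg :: "nat set \<Rightarrow> nat set" where
  "msg S = (THE A. finite A \<and> is_min_gen A S)"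

definition emb_dim :: "nat set \<Rightarrow> nat" where
  "emb_dim S = card (msg S)"

definition mult :: "nat set \<Rightarrow> nat" where
  "mult S = (LEAST x. x \<in> S \<and> x \<noteq> 0)"

definition wAp :: "nat set \<Rightarrow> nat \<Rightarrow> nat" where
  "wAp S i = (LEAST x. x \<in> S \<and> x mod mult S = i mod mult S)"

definition MANS :: "nat set \<Rightarrow> bool" where
  "MANS S \<longleftrightarrow> numerical_semigroup S \<and>
     (\<forall>i j. 1 \<le> i \<and> i < j \<and> j \<le> mult S - 1 \<longrightarrow> wAp S i < wAp S j)"

end

theory Submission
  imports Defs
begin

text \<open>
  The minimal generators of a numerical semigroup are its atoms, the nonzero elements that are
  not sums of two nonzero elements. Adjoining an x outside S that exceeds every atom keeps all
  old atoms, makes x a new one, and leaves the multiplicity m unchanged in S' = \<langle>S, x\<rangle>.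

  S is MANS exactly when, for every y in S, each residue strictly between 0 and y mod m is
  represented by an element of S below y. For S' this is shown by induction on y: either y lies in
  S, or y = y' + x with y' in S'. Writing r = x mod m, residues i < r are represented by
  w(i) \<le> w(r - 1) < x, the residue r by x itself, and residues i > r by z' + x, where z' is the
  witness for y' and i - r, because y mod m = y' mod m + r does not wrap around.
\<close>

subsection \<open>Generated submonoids\<close>

lemma gen_generator: "a \<in> A \<Longrightarrow> a \<in> gen A"
  using gen_add[of a A 0] gen_zero by simp

lemma gen_add_closed: "a \<in> gen A \<Longrightarrow> b \<in> gen A \<Longrightarrow> a + b \<in> gen A"
  by (induction a rule: gen.induct) (auto simp: add.assoc intro: gen.intros)

lemma gen_mono:
  assumes "A \<subseteq> B"
  shows "gen A \<subseteq> gen B"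
proof
  fix y assume "y \<in> gen A"
  then show "y \<in> gen B" by induction (use assms in \<open>auto intro: gen.intros\<close>)
qed

lemma gen_least:
  assumes "A \<subseteq> S" "0 \<in> S" "\<And>a b. a \<in> S \<Longrightarrow> b \<in> S \<Longrightarrow> a + b \<in> S"
  shows "gen A \<subseteq> S"
proof
  fix y assume "y \<in> gen A"
  then show "y \<in> S" by induction (use assms in auto)
qed

lemma gen_insert_cases:
  assumes "y \<in> gen (insert x A)"
  shows "y \<in> gen A \<or> (\<exists>y'\<in>gen (insert x A). y = y' + x)"
  using assms
proof induction
  case gen_zero
  then show ?case by (simp add: gen.gen_zero)
next
  case (gen_add a z)
  show ?case
  proof (cases "a = x")
    case True
    with gen_add show ?thesis by auto
  next
    case False
    with gen_add.hyps(1) have "a \<in> A" by simp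
    from gen_add.IH show ?thesis
    proof
      assume "z \<in> gen A"
      with \<open>a \<in> A\<close> show ?thesis by (simp add: gen.gen_add)
    next
      assume "\<exists>y'\<in>gen (insert x A). z = y' + x"
      then obtain y' where "y' \<in> gen (insert x A)" "z = y' + x" by blast
      with \<open>a \<in> A\<close> show ?thesis
        using gen.gen_add[of a "insert x A" y'] by (auto simp: add.assoc)
    qed
  qed
qed

lemma gen_insert_below:
  "y \<in> gen (insert x A) \<Longrightarrow> y < x \<Longrightarrow> y \<in> gen A"
  using gen_insert_cases by fastforce

subsection \<open>Atoms and the minimal system of generators\<close>

definition atoms :: "nat set \<Rightarrow> nat set" where
  "atoms S = {y \<in> S. y \<noteq> 0 \<and> (\<forall>a\<in>S. \<forall>b\<in>S. a + b = y \<longrightarrow> a = 0 \<or> b = 0)}"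

lemma atomsD:
  assumes "y \<in> atoms S" "a \<in> S" "b \<in> S" "a + b = y"
  shows "a = 0 \<or> b = 0"
  using assms by (auto simp: atoms_def)

lemma atoms_subset: "atoms S \<subseteq> S - {0}"
  by (auto simp: atoms_def)

lemma numerical_semigroup_cofinite:
  assumes "numerical_semigroup S"
  obtains N where "\<And>z. N \<le> z \<Longrightarrow> z \<in> S"
proof -
  have "finite (UNIV - S)" using assms by (simp add: numerical_semigroup_def)
  then obtain N where "\<forall>z\<in>UNIV - S. z < N" using finite_nat_set_iff_bounded by blast
  then show thesis using that by (meson Diff_iff UNIV_I not_le)
qed

lemma atom_mem_generators:
  assumes "y \<in> gen A" "gen A \<subseteq> S" "y \<in> atoms S"
  shows "y \<in> A"
  using assms(1,3)
proof induction
  case gen_zero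
  then show ?case by (simp add: atoms_def)
next
  case (gen_add a z)
  have "a \<in> S" "z \<in> S"
    using gen_add.hyps assms(2) gen_generator by blast+
  with gen_add.prems have "a = 0 \<or> z = 0" by (rule atomsD) simp
  with gen_add show ?case by auto
qed

lemma gen_atoms:
  assumes "numerical_semigroup S"
  shows "gen (atoms S) = S"
proof
  show "gen (atoms S) \<subseteq> S"
  proof (rule gen_least)
    show "atoms S \<subseteq> S" using atoms_subset by blast
  qed (use assms in \<open>simp_all add: numerical_semigroup_def\<close>)
  have "y \<in> gen (atoms S)" if "y \<in> S" for y
    using that
  proof (induction y rule: less_induct)
    case (less y)
    show ?case
    proof (cases "y = 0 \<or> y \<in> atoms S")
      case True
      then show ?thesis using gen_zero gen_generator by auto
    next
      case False
      then obtain a b where "a \<in> S" "b \<in> S" "a + b = y" "a \<noteq> 0" "b \<noteq> 0"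
        using less.prems unfolding atoms_def by blast
      then show ?thesis using less.IH[of a] less.IH[of b] gen_add_closed by force
    qed
  qed
  then show "S \<subseteq> gen (atoms S)" by blast
qed

lemma finite_atoms:
  assumes "numerical_semigroup S"
  shows "finite (atoms S)"
proof -
  obtain N where N: "\<And>z. N \<le> z \<Longrightarrow> z \<in> S"
    using numerical_semigroup_cofinite[OF assms] by blast
  have "y < 2 * (N + 1)" if "y \<in> atoms S" for y
  proof (rule ccontr)
    assume "\<not> y < 2 * (N + 1)"
    then have "N + 1 \<in> S" "y - (N + 1) \<in> S" "(N + 1) + (y - (N + 1)) = y" "y - (N + 1) \<noteq> 0"
      using N by auto
    then have "N + 1 = 0 \<or> y - (N + 1) = 0" by (intro atomsD[OF that])
    with \<open>y - (N + 1) \<noteq> 0\<close> show False by simp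
  qed
  then have "atoms S \<subseteq> {..<2 * (N + 1)}" by blast
  then show ?thesis using finite_subset by blast
qed

lemma atoms_subset_generators:
  assumes "gen A = S"
  shows "atoms S \<subseteq> A"
proof
  fix y assume "y \<in> atoms S"
  moreover from this have "y \<in> gen A" using assms atoms_subset by blast
  ultimately show "y \<in> A" using atom_mem_generators assms by blast
qed

lemma msg_eq_atoms:
  assumes "numerical_semigroup S"
  shows "msg S = atoms S"
  unfolding msg_def
proof (rule the_equality)
  have "gen B \<noteq> S" if "B \<subset> atoms S" for B
  proof
    assume "gen B = S"
    then have "atoms S \<subseteq> B" by (rule atoms_subset_generators)
    with that show False by blast
  qed
  then show "finite (atoms S) \<and> is_min_gen (atoms S) S"
    using finite_atoms[OF assms] gen_atoms[OF assms] by (simp add: is_min_gen_def)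
next
  fix A assume A: "finite A \<and> is_min_gen A S"
  then have "gen A = S" by (simp add: is_min_gen_def)
  then have "atoms S \<subseteq> A" by (rule atoms_subset_generators)
  moreover have "\<not> atoms S \<subset> A"
    using A gen_atoms[OF assms] by (auto simp: is_min_gen_def)
  ultimately show "A = atoms S" by blast
qed

subsection \<open>Multiplicity and the Apery set\<close>

lemma
  assumes "numerical_semigroup S"
  shows mult_mem: "mult S \<in> S" and mult_pos: "0 < mult S"
proof -
  obtain N where "\<And>z. N \<le> z \<Longrightarrow> z \<in> S"
    using numerical_semigroup_cofinite[OF assms] by blast
  then have "N + 1 \<in> S \<and> N + 1 \<noteq> 0" by simp
  then have "mult S \<in> S \<and> mult S \<noteq> 0"
    unfolding mult_def by (rule LeastI)
  then show "mult S \<in> S" "0 < mult S" by simp_all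
qed

lemma mult_le: "y \<in> S \<Longrightarrow> y \<noteq> 0 \<Longrightarrow> mult S \<le> y"
  unfolding mult_def by (rule Least_le) simp

lemma mult_mem_atoms:
  assumes "numerical_semigroup S"
  shows "mult S \<in> atoms S"
proof -
  have "a = 0 \<or> b = 0" if "a \<in> S" "b \<in> S" "a + b = mult S" for a b
    using that mult_le[of a S] mult_le[of b S] mult_pos[OF assms] by linarith
  then show ?thesis using mult_mem[OF assms] mult_pos[OF assms] by (auto simp: atoms_def)
qed

lemma mult_eq_least_atom:
  assumes "numerical_semigroup S" "a \<in> atoms S" "\<And>b. b \<in> atoms S \<Longrightarrow> a \<le> b"
  shows "mult S = a"
proof (rule antisym)
  show "mult S \<le> a" using assms(2) atoms_subset mult_le by blast
  show "a \<le> mult S" using assms(3) mult_mem_atoms[OF assms(1)] .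
qed

lemma
  assumes "numerical_semigroup S"
  shows wAp_mem: "wAp S i \<in> S" and wAp_mod: "wAp S i mod mult S = i mod mult S"
proof -
  obtain N where N: "\<And>z. N \<le> z \<Longrightarrow> z \<in> S"
    using numerical_semigroup_cofinite[OF assms] by blast
  have "N \<le> mult S * N" using mult_pos[OF assms] by simp
  then have "N \<le> i + mult S * N" by linarith
  then have "i + mult S * N \<in> S \<and> (i + mult S * N) mod mult S = i mod mult S"
    using N by simp
  then have "wAp S i \<in> S \<and> wAp S i mod mult S = i mod mult S"
    unfolding wAp_def by (rule LeastI)
  then show "wAp S i \<in> S" "wAp S i mod mult S = i mod mult S" by simp_all
qed

lemma wAp_le: "z \<in> S \<Longrightarrow> z mod mult S = i mod mult S \<Longrightarrow> wAp S i \<le> z"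
  unfolding wAp_def by (rule Least_le) simp

lemma MANS_wAp_less:
  assumes "MANS S" "0 < i" "i < j" "j < mult S"
  shows "wAp S i < wAp S j"
proof -
  have "1 \<le> i" "j \<le> mult S - 1" using assms(2,4) by linarith+
  with assms(1,3) show ?thesis unfolding MANS_def by blast
qed

lemma MANS_iff_residues_below:
  "MANS S \<longleftrightarrow> numerical_semigroup S \<and>
     (\<forall>y\<in>S. \<forall>i. 0 < i \<and> i < y mod mult S \<longrightarrow> (\<exists>z\<in>S. z mod mult S = i \<and> z < y))"
  (is "_ \<longleftrightarrow> _ \<and> ?below")
proof (cases "numerical_semigroup S")
  case NS: True
  let ?m = "mult S"
  have m_pos: "0 < ?m" using mult_pos[OF NS] .
  show ?thesis
  proof
    assume "MANS S"
    have "\<exists>z\<in>S. z mod ?m = i \<and> z < y" if "y \<in> S" "0 < i" "i < y mod ?m" for y i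
    proof (intro bexI conjI)
      have "y mod ?m < ?m" using m_pos by simp
      with \<open>MANS S\<close> that have "wAp S i < wAp S (y mod ?m)" by (intro MANS_wAp_less)
      also have "\<dots> \<le> y" using \<open>y \<in> S\<close> by (simp add: wAp_le)
      finally show "wAp S i < y" .
      have "i < ?m" using \<open>i < y mod ?m\<close> \<open>y mod ?m < ?m\<close> by linarith
      then show "wAp S i mod ?m = i" by (simp add: wAp_mod[OF NS])
    qed (rule wAp_mem[OF NS])
    with NS show "numerical_semigroup S \<and> ?below" by blast
  next
    assume "numerical_semigroup S \<and> ?below"
    then have below: ?below ..
    have "wAp S i < wAp S j" if "1 \<le> i" "i < j" "j \<le> ?m - 1" for i j
    proof -
      have "j < ?m" using that(3) m_pos by linarith
      then have "wAp S j mod ?m = j" by (simp add: wAp_mod[OF NS])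
      with that have "0 < i" "i < wAp S j mod ?m" by simp_all
      with below wAp_mem[OF NS] obtain z where "z \<in> S" "z mod ?m = i" "z < wAp S j"
        by blast
      moreover have "i mod ?m = i" using \<open>i < j\<close> \<open>j < ?m\<close> by simp
      ultimately show ?thesis using wAp_le[of z S i] by simp
    qed
    with NS show "MANS S" by (simp add: MANS_def)
  qed
qed (simp add: MANS_def)

subsection \<open>Adjoining a new generator\<close>

lemma
  assumes "numerical_semigroup S" "gen A = S"
  shows numerical_semigroup_gen_insert: "numerical_semigroup (gen (insert x A))"
    and subset_gen_insert: "S \<subseteq> gen (insert x A)"
proof -
  show sub: "S \<subseteq> gen (insert x A)" using gen_mono[OF subset_insertI[of A x]] assms(2) by simp
  have "finite (UNIV - S)" using assms(1) by (simp add: numerical_semigroup_def)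
  moreover have "UNIV - gen (insert x A) \<subseteq> UNIV - S" using sub by blast
  ultimately have "finite (UNIV - gen (insert x A))" by (rule finite_subset[rotated])
  then show "numerical_semigroup (gen (insert x A))"
    unfolding numerical_semigroup_def using gen_zero gen_add_closed by blast
qed

lemma mult_gen_insert:
  assumes "numerical_semigroup S" "gen A = S" "mult S < x"
  shows "mult (gen (insert x A)) = mult S"
proof -
  let ?S' = "gen (insert x A)"
  have NS': "numerical_semigroup ?S'" and sub: "S \<subseteq> ?S'"
    using numerical_semigroup_gen_insert subset_gen_insert assms by blast+
  have "mult ?S' \<le> mult S"
    using sub mult_mem[OF assms(1)] mult_pos[OF assms(1)] mult_le[of _ ?S'] by blast
  moreover have "mult S \<le> mult ?S'"
  proof (cases "mult ?S' < x")
    case True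
    then have "mult ?S' \<in> S" using gen_insert_below mult_mem[OF NS'] assms(2) by blast
    then show ?thesis using mult_le mult_pos[OF NS'] by blast
  next
    case False
    with assms(3) show ?thesis by simp
  qed
  ultimately show ?thesis by simp
qed

lemma atoms_gen_insert:
  assumes "numerical_semigroup S" "x \<notin> S" "\<And>a. a \<in> atoms S \<Longrightarrow> a < x"
  shows "atoms (gen (insert x (atoms S))) = insert x (atoms S)"
proof -
  let ?A = "atoms S"
  let ?S' = "gen (insert x ?A)"
  have gen_A: "gen ?A = S" using gen_atoms[OF assms(1)] .
  have NS': "numerical_semigroup ?S'"
    using numerical_semigroup_gen_insert[OF assms(1) gen_A] .
  have generators: "insert x ?A \<subseteq> ?S'" by (intro subsetI gen_generator)
  show ?thesis
  proof
    show "atoms ?S' \<subseteq> insert x ?A" by (rule atoms_subset_generators) (rule refl)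
  next
    show "insert x ?A \<subseteq> atoms ?S'"
    proof
      fix y assume y: "y \<in> insert x ?A"
      have "0 \<in> S" using gen_zero[of ?A] gen_A by simp
      with assms(2) have "x \<noteq> 0" by (intro notI) simp
      with y atoms_subset[of S] have "y \<noteq> 0" by auto
      have "p = 0 \<or> q = 0" if "p \<in> ?S'" "q \<in> ?S'" "p + q = y" for p q
      proof (rule ccontr)
        assume nonzero: "\<not> (p = 0 \<or> q = 0)"
        have "y \<le> x" using y assms(3) less_imp_le by blast
        with that nonzero have "p < x" "q < x" by auto
        with gen_insert_below that(1,2) gen_A have "p \<in> S" "q \<in> S" by blast+
        show False
        proof (cases "y = x")
          case True
          with \<open>p \<in> S\<close> \<open>q \<in> S\<close> that(3) assms(1,2) show False
            unfolding numerical_semigroup_def by blast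
        next
          case False
          with y have "y \<in> ?A" by simp
          from atomsD[OF this \<open>p \<in> S\<close> \<open>q \<in> S\<close> that(3)] nonzero show False by simp
        qed
      qed
      with y generators \<open>y \<noteq> 0\<close> show "y \<in> atoms ?S'" by (auto simp: atoms_def)
    qed
  qed
qed

lemma emb_dim_gen_insert:
  assumes "numerical_semigroup S" "x \<notin> S" "\<And>a. a \<in> atoms S \<Longrightarrow> a < x"
  shows "emb_dim (gen (insert x (atoms S))) = emb_dim S + 1"
proof -
  have "numerical_semigroup (gen (insert x (atoms S)))"
    using numerical_semigroup_gen_insert[OF assms(1) gen_atoms[OF assms(1)]] .
  moreover have "x \<notin> atoms S" using assms(2) atoms_subset by blast
  moreover have "finite (atoms S)" using finite_atoms[OF assms(1)] .
  ultimately show ?thesis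
    using atoms_gen_insert[OF assms] by (simp add: emb_dim_def msg_eq_atoms assms(1))
qed

lemma mod_add_no_wrap:
  fixes a b m :: nat
  assumes "b mod m < (a + b) mod m"
  shows "(a + b) mod m = a mod m + b mod m"
proof (cases "m = 0")
  case False
  have "(a + b) mod m = (a mod m + b mod m) mod m" by (simp add: mod_add_eq)
  moreover have "a mod m + b mod m < m"
  proof (rule ccontr)
    assume "\<not> a mod m + b mod m < m"
    moreover have "a mod m < m" "b mod m < m" using False by simp_all
    ultimately have "a mod m + b mod m - m < m" by linarith
    then have "(a mod m + b mod m) mod m = a mod m + b mod m - m"
      using le_mod_geq[of m "a mod m + b mod m"] \<open>\<not> a mod m + b mod m < m\<close> by simp
    with assms \<open>(a + b) mod m = _\<close> \<open>a mod m < m\<close> show False by linarith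
  qed
  ultimately show ?thesis by simp
qed simp

lemma MANS_gen_insert:
  assumes "MANS S" "gen A = S" "x \<notin> S" "mult S < x" "wAp S (x mod mult S - 1) < x"
  shows "MANS (gen (insert x A))"
proof -
  let ?m = "mult S" and ?S' = "gen (insert x A)"
  define r where "r = x mod ?m"
  have NS: "numerical_semigroup S" using assms(1) by (simp add: MANS_def)
  have NS': "numerical_semigroup ?S'" and sub: "S \<subseteq> ?S'"
    using numerical_semigroup_gen_insert[OF NS assms(2)] subset_gen_insert[OF NS assms(2)] .
  have mult': "mult ?S' = ?m" using mult_gen_insert[OF NS assms(2,4)] .
  have m_pos: "0 < ?m" using mult_pos[OF NS] .
  have x_mem: "x \<in> ?S'" by (rule gen_generator) simp
  have below_S: "\<forall>y\<in>S. \<forall>i. 0 < i \<and> i < y mod ?m \<longrightarrow> (\<exists>z\<in>S. z mod ?m = i \<and> z < y)"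
    using assms(1) unfolding MANS_iff_residues_below by (rule conjunct2)
  have below_x: "wAp S i < x" if "0 < i" "i < r" for i
  proof (cases "i = r - 1")
    case False
    have "r < ?m" using m_pos by (simp add: r_def)
    with that False have "i < r - 1" "r - 1 < ?m" by linarith+
    then have "wAp S i < wAp S (r - 1)" by (rule MANS_wAp_less[OF assms(1) that(1)])
    with assms(5) show ?thesis by (simp add: r_def)
  qed (use assms(5) r_def in simp)
  have "\<exists>z\<in>?S'. z mod ?m = i \<and> z < y" if "y \<in> ?S'" "0 < i" "i < y mod ?m" for y i
    using that
  proof (induction y arbitrary: i rule: less_induct)
    case (less y)
    have "i < ?m" using less.prems(3) m_pos by (meson mod_less_divisor order.strict_trans)
    from gen_insert_cases[OF less.prems(1)] assms(2)
    consider "y \<in> S" | y' where "y' \<in> ?S'" "y = y' + x" by blast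
    then show ?case
    proof cases
      case 1
      then show ?thesis using below_S less.prems sub by blast
    next
      case (2 y')
      consider "i < r" | "i = r" | "r < i" by linarith
      then show ?thesis
      proof cases
        case 1
        have "wAp S i < x" using below_x[OF less.prems(2) 1] .
        then have "wAp S i < y" using \<open>y = y' + x\<close> by linarith
        moreover have "wAp S i mod ?m = i" using wAp_mod[OF NS] \<open>i < ?m\<close> by simp
        ultimately show ?thesis using wAp_mem[OF NS] sub by blast
      next
        case 2
        with \<open>y = y' + x\<close> less.prems(3) have "y' \<noteq> 0" by (intro notI) (simp add: r_def)
        with 2 x_mem \<open>y = y' + x\<close> show ?thesis by (auto simp: r_def)
      next
        case 3
        with \<open>y = y' + x\<close> less.prems(3) have "y mod ?m = y' mod ?m + r"
          using mod_add_no_wrap[of x ?m y'] by (simp add: r_def)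
        with 3 less.prems(3) have "0 < i - r" "i - r < y' mod ?m" by linarith+
        moreover have "y' < y" using \<open>y = y' + x\<close> assms(4) by simp
        ultimately obtain z' where z': "z' \<in> ?S'" "z' mod ?m = i - r" "z' < y'"
          using less.IH \<open>y' \<in> ?S'\<close> by blast
        have "(z' + x) mod ?m = (i - r + r) mod ?m"
          by (metis z'(2) mod_add_eq r_def)
        also have "\<dots> = i" using 3 \<open>i < ?m\<close> by simp
        finally show ?thesis
          using gen_add_closed[OF z'(1) x_mem] z'(3) \<open>y = y' + x\<close> by auto
      qed
    qed
  qed
  then show ?thesis unfolding MANS_iff_residues_below mult' using NS' by blast
qed

theorem lemma4p1:
  fixes S :: "nat set" and n :: "nat \<Rightarrow> nat" and e :: nat and x :: nat
  assumes "MANS S"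
    and "msg S = n ` {1..e}"
    and "strict_mono_on {1..e} n"
    and "2 \<le> e" and "e \<le> n 1 - 1"
    and "n e < x"
    and "n e mod n 1 < x mod n 1"
    and "wAp S (x mod n 1 - 1) < x"
    and "x < wAp S (x mod n 1)"
  shows "MANS (gen (n ` {1..e} \<union> {x})) \<and>
         emb_dim (gen (n ` {1..e} \<union> {x})) = emb_dim S + 1"
proof -
  let ?A = "n ` {1..e}"
  have NS: "numerical_semigroup S" using assms(1) by (simp add: MANS_def)
  have atoms: "atoms S = ?A" using msg_eq_atoms[OF NS] assms(2) by simp
  have n_bounds: "n 1 \<le> n k \<and> n k \<le> n e" if "k \<in> {1..e}" for k
    using that assms(4) strict_mono_on_leD[OF assms(3)] by auto
  have "n 1 \<in> atoms S" using atoms assms(4) by simp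
  moreover have "n 1 \<le> b" if "b \<in> atoms S" for b using that atoms n_bounds by auto
  ultimately have mult: "mult S = n 1" by (rule mult_eq_least_atom[OF NS])
  have x_notin: "x \<notin> S"
  proof
    assume "x \<in> S"
    then have "wAp S (x mod n 1) \<le> x" using wAp_le[of x S "x mod n 1"] mult by simp
    with assms(9) show False by simp
  qed
  have atoms_below: "a < x" if "a \<in> atoms S" for a
    using that atoms n_bounds assms(6) by fastforce
  have "MANS (gen (insert x ?A))"
    using MANS_gen_insert[OF assms(1) gen_atoms[OF NS] x_notin]
      atoms_below[OF mult_mem_atoms[OF NS]] assms(8) mult atoms by simp
  moreover have "emb_dim (gen (insert x ?A)) = emb_dim S + 1"
    using emb_dim_gen_insert[OF NS x_notin atoms_below] atoms by simp
  ultimately show ?thesis by simp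
qed

end
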